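(* Let $I\subseteq\mathbb{R}$ be an interval, let $h:J\to\mathbb{R}$ be a positive function on an interval $J\supseteq(0,1)$, let $f\in SX(h,I)$, let $a,b\in I$ with $a<b$, and let $f\in L_{1}[a,b]$. Then for every $\alpha>0$, $$\frac{1}{\alpha h\left(\frac{1}{2}\right)}f\left(\frac{a+b}{2}\right)\leq\frac{\Gamma(\alpha)}{(b-a)^{\alpha}}\left[J_{a^{+}}^{\alpha}f(b)+J_{b^{-}}^{\alpha}f(a)\right]\leq\left[f(a)+f(b)\right]\int_{0}^{1}t^{\alpha-1}\left[h(t)+h(1-t)\right]dt.$$
   Context: Given a positive function $h:J\to\mathbb{R}$, a function $f:I\to\mathbb{R}$ belongs to the class $SX(h,I)$ ($h$-convex functions) if $f$ is nonnegative and $f(\lambda x+(1-\lambda)y)\leq h(\lambda)f(x)+h(1-\lambda)f(y)$ for all $x,y\in I$ and $\lambda\in(0,1)$. For $f\in L_1[a,b]$ and $\alpha>0$, the Riemann–Liouville fractional integrals are $J_{a^{+}}^{\alpha}f(x)=\frac{1}{\Gamma(\alpha)}\int_a^x (x-t)^{\alpha-1}f(t)\,dt$ for $x>a$ and $J_{b^{-}}^{\alpha}f(x)=\frac{1}{\Gamma(\alpha)}\int_x^b (t-x)^{\alpha-1}f(t)\,dt$ for $x<b$, where $\Gamma(\alpha)=\int_0^\infty e^{-u}u^{\alpha-1}\,du$. *)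

theory Defs
  imports "HOL-Analysis.Analysis"
begin

definition hconvex :: "(real \<Rightarrow> real) \<Rightarrow> real set \<Rightarrow> (real \<Rightarrow> real) \<Rightarrow> bool" where
  "hconvex h I f \<longleftrightarrow> (\<forall>x\<in>I. 0 \<le> f x) \<and>
     (\<forall>x\<in>I. \<forall>y\<in>I. \<forall>l\<in>{0<..<1}. f (l * x + (1 - l) * y) \<le> h l * f x + h (1 - l) * f y)"

text \<open>Riemann-Liouville fractional integrals, taken in the extended nonnegative reals
  (the functions they are applied to here are nonnegative, so this is the usual
  integral, with value infinity allowed when it diverges).\<close>
definition RL_left :: "real \<Rightarrow> real \<Rightarrow> (real \<Rightarrow> real) \<Rightarrow> real \<Rightarrow> ennreal" where
  "RL_left \<alpha> a f x = ennreal (1 / Gamma \<alpha>) *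
     (\<integral>\<^sup>+ t\<in>{a<..<x}. ennreal ((x - t) powr (\<alpha> - 1) * f t) \<partial>lborel)"

definition RL_right :: "real \<Rightarrow> real \<Rightarrow> (real \<Rightarrow> real) \<Rightarrow> real \<Rightarrow> ennreal" where
  "RL_right \<alpha> b f x = ennreal (1 / Gamma \<alpha>) *
     (\<integral>\<^sup>+ t\<in>{x<..<b}. ennreal ((t - x) powr (\<alpha> - 1) * f t) \<partial>lborel)"

end

(* The substitutions t = b - (b - a) s and t = a + (b - a) s carry both Riemann-Liouville
   integrals onto (0,1) with the common weight s^(alpha-1), so that (Gamma alpha / (b-a)^alpha)
   [J_a+ f(b) + J_b- f(a)] becomes the integral of s^(alpha-1) [f(x_s) + f(y_s)] over (0,1),
   where x_s = s a + (1-s) b and y_s = s b + (1-s) a are symmetric about the midpoint.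
   h-convexity at lambda = 1/2 gives f((a+b)/2) <= h(1/2) (f(x_s) + f(y_s)), and at lambda = s
   gives f(x_s) + f(y_s) <= (h(s) + h(1-s)) (f(a) + f(b)); integrating against s^(alpha-1),
   whose integral is 1/alpha, yields the two bounds. *)

theory Submission
  imports Defs
begin

text \<open>Unlike \<open>nn_integral_cmult\<close>, no measurability is needed: it is applied to the
  weight h, which is arbitrary.\<close>
lemma nn_integral_cmult_le:
  fixes r :: real
  assumes "0 \<le> r"
  shows "(\<integral>\<^sup>+x. ennreal r * g x \<partial>M) \<le> ennreal r * integral\<^sup>N M g"
proof (cases "r = 0")
  case False
  with assms have "0 < r" by simp
  then have inverse: "ennreal r * ennreal (1 / r) = 1"
    by (simp flip: ennreal_mult)
  show ?thesis
    unfolding nn_integral_def[of M "\<lambda>x. ennreal r * g x"]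
  proof (rule SUP_least, clarify)
    fix \<phi> assume \<phi>: "simple_function M \<phi>" "\<phi> \<le> (\<lambda>x. ennreal r * g x)"
    define \<psi> where "\<psi> x = ennreal (1 / r) * \<phi> x" for x
    have \<psi>: "simple_function M \<psi>"
      unfolding \<psi>_def using \<phi>(1) by (intro simple_function_mult) auto
    have "\<psi> x \<le> g x" for x
    proof -
      have "\<psi> x \<le> ennreal (1 / r) * (ennreal r * g x)"
        unfolding \<psi>_def using \<phi>(2) by (intro mult_left_mono) (auto simp: le_fun_def)
      also have "\<dots> = g x"
        using inverse by (simp add: mult.assoc[symmetric] mult.commute)
      finally show ?thesis .
    qed
    then have "integral\<^sup>S M \<psi> \<le> integral\<^sup>N M g"
      unfolding nn_integral_def using \<psi> by (intro SUP_upper) (auto simp: le_fun_def)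
    moreover have "\<phi> = (\<lambda>x. ennreal r * \<psi> x)"
      using inverse by (auto simp: \<psi>_def fun_eq_iff mult.assoc[symmetric])
    ultimately show "integral\<^sup>S M \<phi> \<le> ennreal r * integral\<^sup>N M g"
      using \<psi> by (simp add: mult_left_mono)
  qed
qed simp

lemma nn_integral_powr_Ioo_01:
  assumes "0 < \<alpha>"
  shows "(\<integral>\<^sup>+s\<in>{0<..<1}. ennreal (s powr (\<alpha> - 1)) \<partial>lborel) = ennreal (1 / \<alpha>)"
proof -
  have "((\<lambda>s. s powr (\<alpha> - 1)) has_integral (1 powr (\<alpha> - 1 + 1) / (\<alpha> - 1 + 1))) {0..1}"
    using assms by (intro has_integral_powr_from_0) auto
  then have "((\<lambda>s. s powr (\<alpha> - 1)) has_integral (1 / \<alpha>)) {0<..<1}"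
    by (simp add: has_integral_Icc_iff_Ioo)
  then show ?thesis
    by (intro nn_integral_has_integral_lebesgue') auto
qed

lemma set_nn_integral_powr_kernel_ge:
  assumes "0 < \<alpha>" and "0 \<le> c" and "\<And>s. s \<in> {0<..<1} \<Longrightarrow> c \<le> g s"
  shows "ennreal (c / \<alpha>) \<le> (\<integral>\<^sup>+s\<in>{0<..<1}. ennreal (s powr (\<alpha> - 1) * g s) \<partial>lborel)"
proof -
  have "ennreal (c / \<alpha>) = ennreal c * (\<integral>\<^sup>+s\<in>{0<..<1}. ennreal (s powr (\<alpha> - 1)) \<partial>lborel)"
    using assms(1,2) by (simp add: nn_integral_powr_Ioo_01 flip: ennreal_mult)
  also have "\<dots> = (\<integral>\<^sup>+s\<in>{0<..<1}. ennreal (s powr (\<alpha> - 1) * c) \<partial>lborel)"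
    using \<open>0 \<le> c\<close>
    by (subst nn_integral_cmult[symmetric]) (auto simp: ennreal_mult'' ac_simps)
  also have "\<dots> \<le> (\<integral>\<^sup>+s\<in>{0<..<1}. ennreal (s powr (\<alpha> - 1) * g s) \<partial>lborel)"
    using assms(3) by (intro nn_integral_mono) (auto intro!: ennreal_leI mult_left_mono split: split_indicator)
  finally show ?thesis .
qed

lemma set_nn_integral_powr_kernel_le:
  assumes "0 \<le> C" and "\<And>s. s \<in> {0<..<1} \<Longrightarrow> g s \<le> C * k s"
  shows "(\<integral>\<^sup>+s\<in>{0<..<1}. ennreal (s powr (\<alpha> - 1) * g s) \<partial>lborel)
           \<le> ennreal C * (\<integral>\<^sup>+s\<in>{0<..<1}. ennreal (s powr (\<alpha> - 1) * k s) \<partial>lborel)"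
proof -
  have "(\<integral>\<^sup>+s\<in>{0<..<1}. ennreal (s powr (\<alpha> - 1) * g s) \<partial>lborel)
      \<le> (\<integral>\<^sup>+s. ennreal C * (ennreal (s powr (\<alpha> - 1) * k s) * indicator {0<..<1} s) \<partial>lborel)"
  proof (intro nn_integral_mono)
    fix s
    have "s \<in> {0<..<1} \<Longrightarrow> s powr (\<alpha> - 1) * g s \<le> C * (s powr (\<alpha> - 1) * k s)"
      using assms(2) by (auto simp: mult.left_commute intro: mult_left_mono)
    then show "ennreal (s powr (\<alpha> - 1) * g s) * indicator {0<..<1} s
        \<le> ennreal C * (ennreal (s powr (\<alpha> - 1) * k s) * indicator {0<..<1} s)"
      using \<open>0 \<le> C\<close> by (auto simp flip: ennreal_mult' intro: ennreal_leI split: split_indicator)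
  qed
  also have "\<dots> \<le> ennreal C * (\<integral>\<^sup>+s\<in>{0<..<1}. ennreal (s powr (\<alpha> - 1) * k s) \<partial>lborel)"
    using \<open>0 \<le> C\<close> by (rule nn_integral_cmult_le)
  finally show ?thesis .
qed

lemma affine_mem_Ioo_iff:
  fixes a b s :: real
  assumes "a < b"
  shows "a + (b - a) * s \<in> {a<..<b} \<longleftrightarrow> s \<in> {0<..<1}"
    and "b - (b - a) * s \<in> {a<..<b} \<longleftrightarrow> s \<in> {0<..<1}"
proof -
  have "0 < (b - a) * s \<longleftrightarrow> 0 < s" "(b - a) * s < (b - a) * 1 \<longleftrightarrow> s < 1"
    using assms by (simp_all add: zero_less_mult_iff)
  then show "a + (b - a) * s \<in> {a<..<b} \<longleftrightarrow> s \<in> {0<..<1}"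
    and "b - (b - a) * s \<in> {a<..<b} \<longleftrightarrow> s \<in> {0<..<1}"
    by auto
qed

lemma nn_integral_Ioo_affine:
  fixes g :: "real \<Rightarrow> ennreal"
  assumes [measurable]: "g \<in> borel_measurable borel" and "a < b"
  shows "(\<integral>\<^sup>+t\<in>{a<..<b}. g t \<partial>lborel)
           = ennreal (b - a) * (\<integral>\<^sup>+s\<in>{0<..<1}. g (a + (b - a) * s) \<partial>lborel)"
proof -
  have "indicator {a<..<b} (a + (b - a) * s) = (indicator {0<..<1} s :: ennreal)" for s
    using affine_mem_Ioo_iff(1)[OF \<open>a < b\<close>] by (simp add: indicator_def)
  then show ?thesis
    using nn_integral_real_affine[of "\<lambda>t. g t * indicator {a<..<b} t" "b - a" a] \<open>a < b\<close>
    by simp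
qed

lemma nn_integral_Ioo_affine_reflected:
  fixes g :: "real \<Rightarrow> ennreal"
  assumes [measurable]: "g \<in> borel_measurable borel" and "a < b"
  shows "(\<integral>\<^sup>+t\<in>{a<..<b}. g t \<partial>lborel)
           = ennreal (b - a) * (\<integral>\<^sup>+s\<in>{0<..<1}. g (b - (b - a) * s) \<partial>lborel)"
proof -
  have "indicator {a<..<b} (b - (b - a) * s) = (indicator {0<..<1} s :: ennreal)" for s
    using affine_mem_Ioo_iff(2)[OF \<open>a < b\<close>] by (simp add: indicator_def)
  moreover have "b + (a - b) * s = b - (b - a) * s" for s
    by (simp add: algebra_simps)
  ultimately show ?thesis
    using nn_integral_real_affine[of "\<lambda>t. g t * indicator {a<..<b} t" "- (b - a)" b] \<open>a < b\<close>
    by simp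
qed

lemma left_kernel_rescale:
  fixes f :: "real \<Rightarrow> real"
  assumes [measurable]: "f \<in> borel_measurable borel" and "a < b"
  shows "(\<integral>\<^sup>+t\<in>{a<..<b}. ennreal ((b - t) powr (\<alpha> - 1) * f t) \<partial>lborel)
           = ennreal ((b - a) powr \<alpha>)
             * (\<integral>\<^sup>+s\<in>{0<..<1}. ennreal (s powr (\<alpha> - 1) * f (b - (b - a) * s)) \<partial>lborel)"
proof -
  have "(\<integral>\<^sup>+t\<in>{a<..<b}. ennreal ((b - t) powr (\<alpha> - 1) * f t) \<partial>lborel)
      = ennreal (b - a) * (\<integral>\<^sup>+s\<in>{0<..<1}.
          ennreal ((b - (b - (b - a) * s)) powr (\<alpha> - 1) * f (b - (b - a) * s)) \<partial>lborel)"
    using \<open>a < b\<close> by (rule nn_integral_Ioo_affine_reflected[rotated]) measurable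
  also have "\<dots> = ennreal (b - a) * (\<integral>\<^sup>+s\<in>{0<..<1}. ennreal ((b - a) powr (\<alpha> - 1))
                      * ennreal (s powr (\<alpha> - 1) * f (b - (b - a) * s)) \<partial>lborel)"
    using \<open>a < b\<close> by (intro arg_cong2[where f="(*)"] set_nn_integral_cong)
      (auto simp: powr_mult ennreal_mult' mult.assoc)
  also have "\<dots> = ennreal ((b - a) * (b - a) powr (\<alpha> - 1))
      * (\<integral>\<^sup>+s\<in>{0<..<1}. ennreal (s powr (\<alpha> - 1) * f (b - (b - a) * s)) \<partial>lborel)"
    using \<open>a < b\<close> by (simp add: nn_integral_cmult mult.assoc ennreal_mult)
  finally show ?thesis
    using \<open>a < b\<close> by (simp add: powr_mult_base)
qed

lemma right_kernel_rescale:
  fixes f :: "real \<Rightarrow> real"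
  assumes [measurable]: "f \<in> borel_measurable borel" and "a < b"
  shows "(\<integral>\<^sup>+t\<in>{a<..<b}. ennreal ((t - a) powr (\<alpha> - 1) * f t) \<partial>lborel)
           = ennreal ((b - a) powr \<alpha>)
             * (\<integral>\<^sup>+s\<in>{0<..<1}. ennreal (s powr (\<alpha> - 1) * f (a + (b - a) * s)) \<partial>lborel)"
proof -
  have "(\<integral>\<^sup>+t\<in>{a<..<b}. ennreal ((t - a) powr (\<alpha> - 1) * f t) \<partial>lborel)
      = ennreal (b - a) * (\<integral>\<^sup>+s\<in>{0<..<1}.
          ennreal ((a + (b - a) * s - a) powr (\<alpha> - 1) * f (a + (b - a) * s)) \<partial>lborel)"
    using \<open>a < b\<close> by (rule nn_integral_Ioo_affine[rotated]) measurable
  also have "\<dots> = ennreal (b - a) * (\<integral>\<^sup>+s\<in>{0<..<1}. ennreal ((b - a) powr (\<alpha> - 1))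
                      * ennreal (s powr (\<alpha> - 1) * f (a + (b - a) * s)) \<partial>lborel)"
    using \<open>a < b\<close> by (intro arg_cong2[where f="(*)"] set_nn_integral_cong)
      (auto simp: powr_mult ennreal_mult' mult.assoc)
  also have "\<dots> = ennreal ((b - a) * (b - a) powr (\<alpha> - 1))
      * (\<integral>\<^sup>+s\<in>{0<..<1}. ennreal (s powr (\<alpha> - 1) * f (a + (b - a) * s)) \<partial>lborel)"
    using \<open>a < b\<close> by (simp add: nn_integral_cmult mult.assoc ennreal_mult)
  finally show ?thesis
    using \<open>a < b\<close> by (simp add: powr_mult_base)
qed

lemma RL_sum_rescaled:
  fixes f :: "real \<Rightarrow> real"
  assumes [measurable]: "f \<in> borel_measurable borel" and "a < b" and "0 < \<alpha>"
  shows "ennreal (Gamma \<alpha> / (b - a) powr \<alpha>) * (RL_left \<alpha> a f b + RL_right \<alpha> b f a)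
           = (\<integral>\<^sup>+s\<in>{0<..<1}. ennreal (s powr (\<alpha> - 1) * f (b - (b - a) * s))
                           + ennreal (s powr (\<alpha> - 1) * f (a + (b - a) * s)) \<partial>lborel)"
proof -
  have "ennreal (Gamma \<alpha> / (b - a) powr \<alpha>) * ennreal (1 / Gamma \<alpha>) * ennreal ((b - a) powr \<alpha>) = 1"
    using Gamma_real_pos[OF \<open>0 < \<alpha>\<close>] \<open>a < b\<close> by (simp flip: ennreal_mult)
  then have "ennreal (Gamma \<alpha> / (b - a) powr \<alpha>) * (RL_left \<alpha> a f b + RL_right \<alpha> b f a)
      = (\<integral>\<^sup>+s\<in>{0<..<1}. ennreal (s powr (\<alpha> - 1) * f (b - (b - a) * s)) \<partial>lborel)
        + (\<integral>\<^sup>+s\<in>{0<..<1}. ennreal (s powr (\<alpha> - 1) * f (a + (b - a) * s)) \<partial>lborel)"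
    unfolding RL_left_def RL_right_def
      left_kernel_rescale[OF assms(1,2)] right_kernel_rescale[OF assms(1,2)]
    by (metis (no_types, lifting) distrib_left mult.assoc mult_1)
  also have "\<dots> = (\<integral>\<^sup>+s\<in>{0<..<1}. ennreal (s powr (\<alpha> - 1) * f (b - (b - a) * s))
                           + ennreal (s powr (\<alpha> - 1) * f (a + (b - a) * s)) \<partial>lborel)"
    by (subst nn_integral_add[symmetric]) (auto simp: distrib_right)
  finally show ?thesis .
qed

lemma hconvex_nonneg: "hconvex h I f \<Longrightarrow> x \<in> I \<Longrightarrow> 0 \<le> f x"
  unfolding hconvex_def by blast

lemma hconvex_le:
  "hconvex h I f \<Longrightarrow> x \<in> I \<Longrightarrow> y \<in> I \<Longrightarrow> 0 < l \<Longrightarrow> l < 1 \<Longrightarrow>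
    f (l * x + (1 - l) * y) \<le> h l * f x + h (1 - l) * f y"
  unfolding hconvex_def by auto

lemma hconvex_restrict:
  assumes "hconvex h I f" and "convex K" and "K \<subseteq> I" and "\<And>x. x \<in> K \<Longrightarrow> g x = f x"
  shows "hconvex h K g"
  unfolding hconvex_def
proof (intro conjI ballI)
  fix x y l assume "x \<in> K" "y \<in> K" "l \<in> {0<..<1::real}"
  moreover from this have "l * x + (1 - l) * y \<in> K"
    using convexD[OF \<open>convex K\<close>, of x y l "1 - l"] by simp
  ultimately show "g (l * x + (1 - l) * y) \<le> h l * g x + h (1 - l) * g y"
    using hconvex_le[OF assms(1), of x y l] assms(3,4) by (auto simp: subset_iff)
qed (use assms hconvex_nonneg in auto)

lemma hconvex_symmetric_pair_bounds:
  assumes "hconvex h I f" "convex I" "a \<in> I" "b \<in> I" "0 < s" "s < 1" "0 < h (1/2)"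
  shows "f ((a + b) / 2) / h (1/2) \<le> f (s * a + (1 - s) * b) + f (s * b + (1 - s) * a)"
    and "f (s * a + (1 - s) * b) + f (s * b + (1 - s) * a) \<le> (h s + h (1 - s)) * (f a + f b)"
proof -
  have p: "s * a + (1 - s) * b \<in> I" and q: "s * b + (1 - s) * a \<in> I"
    using convexD[OF \<open>convex I\<close>, of _ _ s "1 - s"] assms by simp_all
  have mid: "(1/2) * (s * a + (1 - s) * b) + (1 - 1/2) * (s * b + (1 - s) * a) = (a + b) / 2"
    by (simp add: field_simps)
  have "f ((1/2) * (s * a + (1 - s) * b) + (1 - 1/2) * (s * b + (1 - s) * a))
      \<le> h (1/2) * f (s * a + (1 - s) * b) + h (1 - 1/2) * f (s * b + (1 - s) * a)"
    by (rule hconvex_le[OF assms(1) p q]) simp_all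
  then have "f ((a + b) / 2) \<le> h (1/2) * (f (s * a + (1 - s) * b) + f (s * b + (1 - s) * a))"
    unfolding mid by (simp add: distrib_left)
  then show "f ((a + b) / 2) / h (1/2) \<le> f (s * a + (1 - s) * b) + f (s * b + (1 - s) * a)"
    using \<open>0 < h (1/2)\<close> by (simp add: divide_le_eq algebra_simps)
  show "f (s * a + (1 - s) * b) + f (s * b + (1 - s) * a) \<le> (h s + h (1 - s)) * (f a + f b)"
    using hconvex_le[OF assms(1,3,4,5,6)] hconvex_le[OF assms(1,4,3,5,6)]
    by (simp add: algebra_simps)
qed

lemma RL_left_cong:
  assumes "\<And>t. t \<in> {a<..<x} \<Longrightarrow> f t = g t"
  shows "RL_left \<alpha> a f x = RL_left \<alpha> a g x"
proof -
  have "(\<integral>\<^sup>+t\<in>{a<..<x}. ennreal ((x - t) powr (\<alpha> - 1) * f t) \<partial>lborel)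
      = (\<integral>\<^sup>+t\<in>{a<..<x}. ennreal ((x - t) powr (\<alpha> - 1) * g t) \<partial>lborel)"
    using assms by (intro set_nn_integral_cong) auto
  then show ?thesis
    by (simp add: RL_left_def)
qed

lemma RL_right_cong:
  assumes "\<And>t. t \<in> {x<..<b} \<Longrightarrow> f t = g t"
  shows "RL_right \<alpha> b f x = RL_right \<alpha> b g x"
proof -
  have "(\<integral>\<^sup>+t\<in>{x<..<b}. ennreal ((t - x) powr (\<alpha> - 1) * f t) \<partial>lborel)
      = (\<integral>\<^sup>+t\<in>{x<..<b}. ennreal ((t - x) powr (\<alpha> - 1) * g t) \<partial>lborel)"
    using assms by (intro set_nn_integral_cong) auto
  then show ?thesis
    by (simp add: RL_right_def)
qed

theorem hconvex_RL_Hermite_Hadamard: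
  fixes h f :: "real \<Rightarrow> real" and a b \<alpha> :: real
  assumes f: "hconvex h {a..b} f" and [measurable]: "f \<in> borel_measurable borel"
    and h: "\<And>t. t \<in> {0<..<1} \<Longrightarrow> 0 < h t" and "a < b" and "0 < \<alpha>"
  shows "ennreal (f ((a + b) / 2) / (\<alpha> * h (1/2)))
           \<le> ennreal (Gamma \<alpha> / (b - a) powr \<alpha>) * (RL_left \<alpha> a f b + RL_right \<alpha> b f a)
         \<and> ennreal (Gamma \<alpha> / (b - a) powr \<alpha>) * (RL_left \<alpha> a f b + RL_right \<alpha> b f a)
           \<le> ennreal (f a + f b) *
             (\<integral>\<^sup>+ t\<in>{0<..<1}. ennreal (t powr (\<alpha> - 1) * (h t + h (1 - t))) \<partial>lborel)"
proof -
  have points: "b - (b - a) * s \<in> {a..b}" "a + (b - a) * s \<in> {a..b}" if "s \<in> {0<..<1}" for s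
    using affine_mem_Ioo_iff[OF \<open>a < b\<close>, of s] that by auto
  have rescaled: "ennreal (Gamma \<alpha> / (b - a) powr \<alpha>) * (RL_left \<alpha> a f b + RL_right \<alpha> b f a)
      = (\<integral>\<^sup>+s\<in>{0<..<1}. ennreal (s powr (\<alpha> - 1) * (f (b - (b - a) * s) + f (a + (b - a) * s))) \<partial>lborel)"
    unfolding RL_sum_rescaled[OF assms(2,4,5)] using points hconvex_nonneg[OF f]
    by (intro set_nn_integral_cong) (auto simp: distrib_left)
  have bounds:
    "f ((a + b) / 2) / h (1/2) \<le> f (b - (b - a) * s) + f (a + (b - a) * s)"
    "f (b - (b - a) * s) + f (a + (b - a) * s) \<le> (f a + f b) * (h s + h (1 - s))"
    if "s \<in> {0<..<1}" for s
  proof -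
    have "b - (b - a) * s = s * a + (1 - s) * b" "a + (b - a) * s = s * b + (1 - s) * a"
      by algebra+
    moreover have "a \<in> {a..b}" "b \<in> {a..b}"
      using \<open>a < b\<close> by auto
    moreover note hconvex_symmetric_pair_bounds[where a=a and b=b and s=s, OF f convex_real_interval(5)]
    ultimately show "f ((a + b) / 2) / h (1/2) \<le> f (b - (b - a) * s) + f (a + (b - a) * s)"
      "f (b - (b - a) * s) + f (a + (b - a) * s) \<le> (f a + f b) * (h s + h (1 - s))"
      using that h[of "1/2"] by (simp_all add: mult.commute)
  qed
  have lower: "ennreal (f ((a + b) / 2) / h (1/2) / \<alpha>)
      \<le> ennreal (Gamma \<alpha> / (b - a) powr \<alpha>) * (RL_left \<alpha> a f b + RL_right \<alpha> b f a)"
    unfolding rescaled using bounds(1) \<open>0 < \<alpha>\<close> h[of "1/2"] hconvex_nonneg[OF f, of "(a + b) / 2"] \<open>a < b\<close>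
    by (intro set_nn_integral_powr_kernel_ge) auto
  have upper: "ennreal (Gamma \<alpha> / (b - a) powr \<alpha>) * (RL_left \<alpha> a f b + RL_right \<alpha> b f a)
      \<le> ennreal (f a + f b) *
             (\<integral>\<^sup>+ t\<in>{0<..<1}. ennreal (t powr (\<alpha> - 1) * (h t + h (1 - t))) \<partial>lborel)"
    unfolding rescaled using bounds(2) hconvex_nonneg[OF f, of a] hconvex_nonneg[OF f, of b] \<open>a < b\<close>
    by (intro set_nn_integral_powr_kernel_le) auto
  have midpoint_scale: "f ((a + b) / 2) / (\<alpha> * h (1/2)) = f ((a + b) / 2) / h (1/2) / \<alpha>"
    by (simp add: ac_simps)
  show ?thesis
    unfolding midpoint_scale using lower upper by (rule conjI)
qed

theorem theorem9:
  fixes h f :: "real \<Rightarrow> real" and I J :: "real set" and a b \<alpha> :: real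
  assumes "is_interval I" and "is_interval J" and "{0<..<1} \<subseteq> J"
    and "\<forall>t\<in>J. 0 < h t"
    and "hconvex h I f"
    and "a \<in> I" and "b \<in> I" and "a < b"
    and "set_integrable lborel {a..b} f"
    and "0 < \<alpha>"
  shows "ennreal (f ((a + b) / 2) / (\<alpha> * h (1/2)))
           \<le> ennreal (Gamma \<alpha> / (b - a) powr \<alpha>) * (RL_left \<alpha> a f b + RL_right \<alpha> b f a)
         \<and> ennreal (Gamma \<alpha> / (b - a) powr \<alpha>) * (RL_left \<alpha> a f b + RL_right \<alpha> b f a)
           \<le> ennreal (f a + f b) *
             (\<integral>\<^sup>+ t\<in>{0<..<1}. ennreal (t powr (\<alpha> - 1) * (h t + h (1 - t))) \<partial>lborel)"
proof -
  \<comment> \<open>f itself need not be measurable; its truncation to [a,b] is, and agrees with f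
    wherever f enters the statement.\<close>
  define F where "F = (\<lambda>x. indicator {a..b} x * f x)"
  have F_measurable: "F \<in> borel_measurable borel"
    using borel_measurable_integrable[OF assms(9)[unfolded set_integrable_def]]
    by (simp add: F_def)
  have "{a..b} \<subseteq> I"
    using mem_is_interval_1_I[OF assms(1,6,7)] by auto
  moreover have F_eq: "F x = f x" if "x \<in> {a..b}" for x
    using that by (simp add: F_def)
  ultimately have F_hconvex: "hconvex h {a..b} F"
    by (rule hconvex_restrict[OF assms(5) convex_real_interval(5)])
  have h_pos: "\<And>t. t \<in> {0<..<1} \<Longrightarrow> 0 < h t"
    using assms(3,4) by auto
  have "ennreal (F ((a + b) / 2) / (\<alpha> * h (1/2)))
           \<le> ennreal (Gamma \<alpha> / (b - a) powr \<alpha>) * (RL_left \<alpha> a F b + RL_right \<alpha> b F a)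
         \<and> ennreal (Gamma \<alpha> / (b - a) powr \<alpha>) * (RL_left \<alpha> a F b + RL_right \<alpha> b F a)
           \<le> ennreal (F a + F b) *
             (\<integral>\<^sup>+ t\<in>{0<..<1}. ennreal (t powr (\<alpha> - 1) * (h t + h (1 - t))) \<partial>lborel)"
    by (rule hconvex_RL_Hermite_Hadamard[OF F_hconvex F_measurable h_pos \<open>a < b\<close> \<open>0 < \<alpha>\<close>])
  moreover have "RL_left \<alpha> a F b = RL_left \<alpha> a f b" "RL_right \<alpha> b F a = RL_right \<alpha> b f a"
    using F_eq by (auto intro!: RL_left_cong RL_right_cong)
  moreover have "F ((a + b) / 2) = f ((a + b) / 2)" "F a = f a" "F b = f b"
    using \<open>a < b\<close> by (simp_all add: F_eq)
  ultimately show ?thesis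
    by simp
qed

end
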